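(* Fix $\epsilon\in(0,\frac13)$ and $d\ge4$. Let $f:\{0,1\}^d\to\mathbb{R}$ satisfy $\ell_0(f,\mathrm{Lip})\le\epsilon$. Choose $p\in\{0,1\}^d$ uniformly at random, set $t=2\sqrt{d\log(d/\epsilon)}$ and $I=[f(p)-t,f(p)+t]$. Then, with probability at most $\frac5{12}$ over $p$, $\Pr_{x}[f(x)\notin I]>\epsilon[\overline I]+\frac\epsilon d$, where $x$ is uniform in $\{0,1\}^d$ and $\overline I=\mathbb{R}\setminus I$.
   Context: On $\{0,1\}^d$ with Hamming distance, $f$ is Lipschitz if $|f(x)-f(y)|\le|x-y|$; $\ell_0(f,\mathrm{Lip})=\min_{g\text{ Lipschitz}}\Pr_x[f(x)\ne g(x)]$. $VS_f(x,y)=|f(x)-f(y)|-|x-y|$ if positive, else $0$; $B_{0,f}$ is the graph on $\{0,1\}^d$ with an edge between $x,y$ iff $VS_f(x,y)>0$. Fix a canonical minimum vertex cover $C$ of $B_{0,f}$; for an interval (or set) $J\subseteq\mathbb{R}$, $\epsilon[J]=|\{x\in C: f(x)\in J\}|/2^d$. (Equivalently, $\Pr_x[f(x)\notin I]$ is the $\ell_0$-distance between $f$ and the partial function $f_I$ that agrees with $f$ where $f(x)\in I$ and is undefined elsewhere.) *)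

theory Defs
  imports "HOL-Analysis.Analysis"
begin

text \<open>The hypercube {0,1}^d, with a point represented by the set of its 1-coordinates.\<close>
definition cube :: "nat \<Rightarrow> nat set set" where
  "cube d = Pow {..<d}"

definition hamming :: "nat set \<Rightarrow> nat set \<Rightarrow> nat" where
  "hamming x y = card ((x - y) \<union> (y - x))"

definition lipschitz_on_cube :: "nat \<Rightarrow> (nat set \<Rightarrow> real) \<Rightarrow> bool" where
  "lipschitz_on_cube d g \<longleftrightarrow>
     (\<forall>x\<in>cube d. \<forall>y\<in>cube d. \<bar>g x - g y\<bar> \<le> real (hamming x y))"

definition disagree :: "nat \<Rightarrow> (nat set \<Rightarrow> real) \<Rightarrow> (nat set \<Rightarrow> real) \<Rightarrow> real" where
  "disagree d f g = real (card {x\<in>cube d. f x \<noteq> g x}) / 2 ^ d"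

definition l0_dist_lip :: "nat \<Rightarrow> (nat set \<Rightarrow> real) \<Rightarrow> real" where
  "l0_dist_lip d f = Inf (disagree d f ` {g. lipschitz_on_cube d g})"

definition VS :: "(nat set \<Rightarrow> real) \<Rightarrow> nat set \<Rightarrow> nat set \<Rightarrow> real" where
  "VS f x y = max 0 (\<bar>f x - f y\<bar> - real (hamming x y))"

definition B0_edge :: "nat \<Rightarrow> (nat set \<Rightarrow> real) \<Rightarrow> nat set \<Rightarrow> nat set \<Rightarrow> bool" where
  "B0_edge d f x y \<longleftrightarrow> x \<in> cube d \<and> y \<in> cube d \<and> VS f x y > 0"

definition vertex_cover_B0 :: "nat \<Rightarrow> (nat set \<Rightarrow> real) \<Rightarrow> nat set set \<Rightarrow> bool" where
  "vertex_cover_B0 d f C \<longleftrightarrow> C \<subseteq> cube d \<and>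
     (\<forall>x y. B0_edge d f x y \<longrightarrow> x \<in> C \<or> y \<in> C)"

definition min_vertex_cover_B0 :: "nat \<Rightarrow> (nat set \<Rightarrow> real) \<Rightarrow> nat set set \<Rightarrow> bool" where
  "min_vertex_cover_B0 d f C \<longleftrightarrow> vertex_cover_B0 d f C \<and>
     (\<forall>C'. vertex_cover_B0 d f C' \<longrightarrow> card C \<le> card C')"

definition eps_mass :: "nat \<Rightarrow> (nat set \<Rightarrow> real) \<Rightarrow> nat set set \<Rightarrow> real set \<Rightarrow> real" where
  "eps_mass d f C J = real (card {x\<in>C. f x \<in> J}) / 2 ^ d"

definition prob_outside :: "nat \<Rightarrow> (nat set \<Rightarrow> real) \<Rightarrow> real set \<Rightarrow> real" where
  "prob_outside d f I = real (card {x\<in>cube d. f x \<notin> I}) / 2 ^ d"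

end

theory Submission
  imports Defs "HOL-Probability.Hoeffding"
begin

text \<open>A best Lipschitz approximation of \<open>f\<close> disagrees with \<open>f\<close> on a vertex cover of \<open>B\<^sub>0\<^sub>,\<^sub>f\<close>,
  so the minimum cover \<open>C\<close> has density at most \<open>\<epsilon>\<close>. Off \<open>C\<close> the function \<open>f\<close> is Lipschitz, hence
  extends to a Lipschitz \<open>G\<close> on the whole cube, and by McDiarmid's inequality \<open>G\<close> is farther than
  \<open>s = \<surd>(d ln (d/\<epsilon>))\<close> from its mean only on a set \<open>B\<close> of density \<open>2 (\<epsilon>/d)\<^sup>2\<close>. For a center
  \<open>p \<notin> C \<union> B\<close>, every \<open>x\<close> with \<open>f x\<close> outside \<open>[f p - 2s, f p + 2s]\<close> lies in \<open>C\<close> (and is counted by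
  \<open>\<epsilon>[- I]\<close>) or in \<open>B\<close>. So bad centers lie in \<open>C \<union> B\<close>, of density at most \<open>\<epsilon> + \<epsilon>/d < 1/3 + 1/12\<close>.\<close>

lemma finite_cube [simp]: "finite (cube d)"
  by (simp add: cube_def)

lemma card_cube: "card (cube d) = 2 ^ d"
  by (simp add: cube_def card_Pow)

lemma finite_of_mem_cube: "x \<in> cube d \<Longrightarrow> finite x"
  by (auto simp: cube_def intro: finite_subset)

lemma dim_notin_of_mem_cube: "x \<in> cube d \<Longrightarrow> d \<notin> x"
  by (auto simp: cube_def)

lemma cube_Suc: "cube (Suc d) = cube d \<union> insert d ` cube d"
  by (simp add: cube_def lessThan_Suc Pow_insert)

lemma sum_cube_Suc: "(\<Sum>x\<in>cube (Suc d). F x) = (\<Sum>x\<in>cube d. F x + F (insert d x))"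
proof -
  have disjoint: "cube d \<inter> insert d ` cube d = {}"
    using dim_notin_of_mem_cube by blast
  have "inj_on (insert d) (cube d)"
    by (rule inj_onI) (metis insert_ident dim_notin_of_mem_cube)
  then show ?thesis
    unfolding cube_Suc by (simp add: sum.union_disjoint disjoint sum.reindex sum.distrib)
qed

lemma hamming_sym: "hamming x y = hamming y x"
  by (simp add: hamming_def Un_commute)

lemma hamming_self [simp]: "hamming x x = 0"
  by (simp add: hamming_def)

lemma hamming_insert_insert:
  "a \<notin> x \<Longrightarrow> a \<notin> y \<Longrightarrow> hamming (insert a x) (insert a y) = hamming x y"
  by (simp add: hamming_def insert_Diff_if)

lemma hamming_insert_self: "a \<notin> x \<Longrightarrow> hamming x (insert a x) = 1"
proof -
  assume "a \<notin> x"
  then have "(x - insert a x) \<union> (insert a x - x) = {a}" by auto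
  then show ?thesis by (simp add: hamming_def)
qed

lemma hamming_triangle:
  assumes "finite x" "finite y" "finite z"
  shows "hamming x z \<le> hamming x y + hamming y z"
proof -
  have "card ((x - z) \<union> (z - x)) \<le> card (((x - y) \<union> (y - x)) \<union> ((y - z) \<union> (z - y)))"
    by (rule card_mono) (use assms in auto)
  also have "\<dots> \<le> card ((x - y) \<union> (y - x)) + card ((y - z) \<union> (z - y))"
    by (rule card_Un_le)
  finally show ?thesis by (simp add: hamming_def)
qed

lemma exp_add_exp_le_hoeffding:
  fixes a b lam :: real
  assumes "lam \<ge> 0" "\<bar>a - b\<bar> \<le> 1"
  shows "exp (lam * a) + exp (lam * b) \<le> 2 * exp (lam * (a + b) / 2 + lam\<^sup>2 / 8)"
proof -
  have ordered: "exp (lam * x) + exp (lam * y) \<le> 2 * exp (lam * (x + y) / 2 + lam\<^sup>2 / 8)"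
    if "x \<le> y" "y - x \<le> 1" for x y
  proof -
    define h where "h = lam * (y - x)"
    have "-h * (1/2) + ln (1 + (1/2) * (exp h - 1)) \<le> h\<^sup>2 / 8"
      using Hoeffdings_lemma_aux[of h "1/2"] assms that by (simp add: h_def)
    then have "ln ((1 + exp h) / 2) \<le> h / 2 + h\<^sup>2 / 8"
      by (simp add: diff_divide_distrib add_divide_distrib)
    then have "(1 + exp h) / 2 \<le> exp (h / 2 + h\<^sup>2 / 8)"
      by (metis add_pos_pos divide_pos_pos exp_gt_zero exp_le_cancel_iff exp_ln zero_less_numeral zero_less_one)
    then have half: "1 + exp h \<le> 2 * exp (h / 2 + h\<^sup>2 / 8)"
      by simp
    have "h\<^sup>2 = lam\<^sup>2 * (y - x)\<^sup>2" by (simp add: h_def power_mult_distrib)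
    also have "\<dots> \<le> lam\<^sup>2" using that by (simp add: mult_left_le power_le_one)
    finally have hsq: "h\<^sup>2 \<le> lam\<^sup>2" .
    have "exp (lam * x) + exp (lam * y) = exp (lam * x) * (1 + exp h)"
      by (simp add: h_def algebra_simps flip: exp_add)
    also have "\<dots> \<le> exp (lam * x) * (2 * exp (h / 2 + h\<^sup>2 / 8))"
      using half by simp
    also have "\<dots> = 2 * exp (lam * (x + y) / 2 + h\<^sup>2 / 8)"
      by (simp add: h_def field_simps flip: exp_add)
    also have "\<dots> \<le> 2 * exp (lam * (x + y) / 2 + lam\<^sup>2 / 8)"
      using hsq by simp
    finally show ?thesis .
  qed
  show ?thesis
    using ordered[of a b] ordered[of b a] assms(2) by (cases "a \<le> b") (simp_all add: add.commute)
qed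

definition cube_mean :: "nat \<Rightarrow> (nat set \<Rightarrow> real) \<Rightarrow> real" where
  "cube_mean d g = (\<Sum>x\<in>cube d. g x) / 2 ^ d"

text \<open>The moment generating function bound behind McDiarmid's inequality, by induction on the
  dimension: averaging a Lipschitz function over the last coordinate gives a Lipschitz function
  on the smaller cube, and each fibre \<open>{x, insert d x}\<close> costs the two-point Hoeffding factor.\<close>

lemma sum_exp_le_of_lipschitz_on_cube:
  assumes "lipschitz_on_cube d g" "lam \<ge> 0"
  shows "(\<Sum>x\<in>cube d. exp (lam * g x)) \<le> 2 ^ d * exp (lam * cube_mean d g + real d * lam\<^sup>2 / 8)"
  using assms(1)
proof (induction d arbitrary: g)
  case 0
  then show ?case by (simp add: cube_def cube_mean_def)
next
  case (Suc d)
  define h where "h x = (g x + g (insert d x)) / 2" for x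
  have g_lip: "\<bar>g x - g y\<bar> \<le> real (hamming x y)" if "x \<in> cube (Suc d)" "y \<in> cube (Suc d)" for x y
    using Suc.prems that unfolding lipschitz_on_cube_def by blast
  have h_lip: "lipschitz_on_cube d h"
    unfolding lipschitz_on_cube_def
  proof (intro ballI)
    fix x y assume xy: "x \<in> cube d" "y \<in> cube d"
    have "\<bar>g x - g y\<bar> \<le> real (hamming x y)"
      using g_lip xy by (simp add: cube_Suc)
    moreover have "\<bar>g (insert d x) - g (insert d y)\<bar> \<le> real (hamming x y)"
      using g_lip[of "insert d x" "insert d y"] xy
      by (simp add: cube_Suc hamming_insert_insert dim_notin_of_mem_cube)
    ultimately show "\<bar>h x - h y\<bar> \<le> real (hamming x y)"
      unfolding h_def abs_le_iff by (simp add: field_simps)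
  qed
  have fibre: "exp (lam * g x) + exp (lam * g (insert d x)) \<le> 2 * exp (lam\<^sup>2 / 8) * exp (lam * h x)"
    if x: "x \<in> cube d" for x
  proof -
    have "\<bar>g x - g (insert d x)\<bar> \<le> 1"
      using g_lip[of x "insert d x"] x by (simp add: cube_Suc hamming_insert_self dim_notin_of_mem_cube)
    from exp_add_exp_le_hoeffding[OF assms(2) this]
    show ?thesis by (simp add: h_def algebra_simps flip: exp_add)
  qed
  have mean: "cube_mean d h = cube_mean (Suc d) g"
    by (simp add: cube_mean_def h_def sum_cube_Suc sum.distrib flip: sum_divide_distrib)
  have "(\<Sum>x\<in>cube (Suc d). exp (lam * g x))
      = (\<Sum>x\<in>cube d. exp (lam * g x) + exp (lam * g (insert d x)))"
    by (rule sum_cube_Suc)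
  also have "\<dots> \<le> 2 * exp (lam\<^sup>2 / 8) * (\<Sum>x\<in>cube d. exp (lam * h x))"
    unfolding sum_distrib_left by (rule sum_mono) (rule fibre)
  also have "\<dots> \<le> 2 * exp (lam\<^sup>2 / 8) * (2 ^ d * exp (lam * cube_mean d h + real d * lam\<^sup>2 / 8))"
    using Suc.IH[OF h_lip] by simp
  also have "\<dots> = 2 ^ Suc d * exp (lam * cube_mean (Suc d) g + real (Suc d) * lam\<^sup>2 / 8)"
    by (simp add: mean algebra_simps add_divide_distrib flip: exp_add)
  finally show ?case .
qed

lemma card_upper_tail_le:
  assumes "lipschitz_on_cube d g" "s > 0" "d > 0"
  shows "real (card {x\<in>cube d. s \<le> g x - cube_mean d g}) \<le> 2 ^ d * exp (- 2 * s\<^sup>2 / real d)"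
proof -
  define lam where "lam = 4 * s / real d"
  define T where "T = {x\<in>cube d. s \<le> g x - cube_mean d g}"
  have lam: "lam \<ge> 0" using assms by (simp add: lam_def)
  have "real (card T) * exp (lam * s) = (\<Sum>x\<in>T. exp (lam * s))"
    by simp
  also have "\<dots> \<le> (\<Sum>x\<in>T. exp (lam * g x) * exp (- lam * cube_mean d g))"
  proof (rule sum_mono)
    fix x assume "x \<in> T"
    then have "lam * s \<le> lam * (g x - cube_mean d g)"
      unfolding T_def using lam by (simp add: mult_left_mono)
    then show "exp (lam * s) \<le> exp (lam * g x) * exp (- lam * cube_mean d g)"
      by (simp add: algebra_simps flip: exp_add)
  qed
  also have "\<dots> \<le> (\<Sum>x\<in>cube d. exp (lam * g x)) * exp (- lam * cube_mean d g)"
    unfolding sum_distrib_right by (rule sum_mono2) (auto simp: T_def)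
  also have "\<dots> \<le> 2 ^ d * exp (lam * cube_mean d g + real d * lam\<^sup>2 / 8) * exp (- lam * cube_mean d g)"
    using sum_exp_le_of_lipschitz_on_cube[OF assms(1) lam] by simp
  also have "\<dots> = 2 ^ d * exp (real d * lam\<^sup>2 / 8)"
    by (simp add: mult.assoc flip: exp_add)
  finally have "real (card T) \<le> 2 ^ d * exp (real d * lam\<^sup>2 / 8) / exp (lam * s)"
    by (simp add: pos_le_divide_eq)
  also have "\<dots> = 2 ^ d * exp (real d * lam\<^sup>2 / 8 - lam * s)"
    by (simp add: exp_diff)
  also have "real d * lam\<^sup>2 / 8 - lam * s = - 2 * s\<^sup>2 / real d"
    using assms by (simp add: lam_def field_simps power2_eq_square)
  finally show ?thesis unfolding T_def .
qed

lemma card_tail_le: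
  assumes "lipschitz_on_cube d g" "s > 0" "d > 0"
  shows "real (card {x\<in>cube d. s \<le> \<bar>g x - cube_mean d g\<bar>}) \<le> 2 * 2 ^ d * exp (- 2 * s\<^sup>2 / real d)"
proof -
  have neg_lip: "lipschitz_on_cube d (\<lambda>x. - g x)"
    using assms(1) by (simp add: lipschitz_on_cube_def abs_minus_commute)
  have neg_mean: "cube_mean d (\<lambda>x. - g x) = - cube_mean d g"
    by (simp add: cube_mean_def sum_negf)
  have "{x\<in>cube d. s \<le> \<bar>g x - cube_mean d g\<bar>} =
        {x\<in>cube d. s \<le> g x - cube_mean d g} \<union> {x\<in>cube d. s \<le> - g x - cube_mean d (\<lambda>x. - g x)}"
    using neg_mean by auto
  then have "card {x\<in>cube d. s \<le> \<bar>g x - cube_mean d g\<bar>} \<le>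
        card {x\<in>cube d. s \<le> g x - cube_mean d g} + card {x\<in>cube d. s \<le> - g x - cube_mean d (\<lambda>x. - g x)}"
    by (simp add: card_Un_le)
  then show ?thesis
    using card_upper_tail_le[OF assms] card_upper_tail_le[OF neg_lip assms(2,3)] by linarith
qed

lemma card_tail_at_log_scale_le:
  assumes "lipschitz_on_cube d g" "0 < \<epsilon>" "2 * \<epsilon> \<le> real d"
  shows "real (card {x\<in>cube d. sqrt (real d * ln (real d / \<epsilon>)) \<le> \<bar>g x - cube_mean d g\<bar>}) / 2 ^ d
           \<le> \<epsilon> / real d"
proof -
  define L where "L = ln (real d / \<epsilon>)"
  define q where "q = \<epsilon> / real d"
  have d: "d > 0" using assms by simp
  have L: "L > 0" using assms by (simp add: L_def ln_gt_zero)
  have q: "0 \<le> q" "2 * q \<le> 1" using assms by (simp_all add: q_def field_simps)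
  have "exp (- 2 * (sqrt (real d * L))\<^sup>2 / real d) = exp (- L) * exp (- L)"
    using d L by (simp flip: exp_add)
  also have "exp (- L) = q"
    using assms by (simp add: L_def q_def exp_minus)
  finally have "exp (- 2 * (sqrt (real d * L))\<^sup>2 / real d) = q * q" .
  with card_tail_le[OF assms(1) _ d, of "sqrt (real d * L)"] d L
  have "real (card {x\<in>cube d. sqrt (real d * L) \<le> \<bar>g x - cube_mean d g\<bar>}) / 2 ^ d \<le> q * (2 * q)"
    by (simp add: divide_le_eq mult_ac)
  also have "\<dots> \<le> q"
    using mult_left_mono[OF q(2) q(1)] by simp
  finally show ?thesis
    by (simp add: L_def q_def)
qed

lemma lipschitz_on_cube_extension:
  assumes "D \<subseteq> cube d" "D \<noteq> {}"
    and f_lip: "\<And>x y. x \<in> D \<Longrightarrow> y \<in> D \<Longrightarrow> \<bar>f x - f y\<bar> \<le> real (hamming x y)"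
  obtains G where "lipschitz_on_cube d G" "\<And>x. x \<in> D \<Longrightarrow> G x = f x"
proof -
  define G where "G x = Min ((\<lambda>y. f y + real (hamming x y)) ` D)" for x
  have D_fin: "finite D"
    using assms(1) by (rule finite_subset) simp
  have G_le: "G x \<le> f y + real (hamming x y)" if "y \<in> D" for x y
    unfolding G_def using D_fin that by (intro Min_le) auto
  have G_attained: "\<exists>y\<in>D. G x = f y + real (hamming x y)" for x
  proof -
    have "G x \<in> (\<lambda>y. f y + real (hamming x y)) ` D"
      unfolding G_def using D_fin assms(2) by (intro Min_in) auto
    then show ?thesis by auto
  qed
  have G_diff: "G x - G z \<le> real (hamming x z)" if "x \<in> cube d" "z \<in> cube d" for x z
  proof -
    obtain y where y: "y \<in> D" "G z = f y + real (hamming z y)"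
      using G_attained by blast
    have "y \<in> cube d"
      using y(1) assms(1) by blast
    then have "hamming x y \<le> hamming x z + hamming z y"
      using that by (intro hamming_triangle finite_of_mem_cube[of _ d])
    with G_le[OF y(1), of x] y(2) show ?thesis by linarith
  qed
  have "lipschitz_on_cube d G"
    unfolding lipschitz_on_cube_def abs_le_iff
    using G_diff hamming_sym by fastforce
  moreover have "G x = f x" if "x \<in> D" for x
  proof (rule antisym)
    show "G x \<le> f x" using G_le[OF that, of x] by simp
    obtain y where y: "y \<in> D" "G x = f y + real (hamming x y)"
      using G_attained by blast
    with f_lip[OF that y(1)] show "f x \<le> G x" by (simp add: abs_le_iff)
  qed
  ultimately show ?thesis
    using that by blast
qed

lemma vertex_cover_disagreement_set:
  assumes "lipschitz_on_cube d g"
  shows "vertex_cover_B0 d f {x\<in>cube d. f x \<noteq> g x}"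
  using assms by (fastforce simp: vertex_cover_B0_def B0_edge_def VS_def lipschitz_on_cube_def)

lemma l0_dist_lip_attained:
  obtains g where "lipschitz_on_cube d g" "disagree d f g = l0_dist_lip d f"
proof -
  let ?A = "disagree d f ` {g. lipschitz_on_cube d g}"
  have "?A \<subseteq> (\<lambda>k. real k / 2 ^ d) ` {..card (cube d)}"
    by (auto simp: disagree_def intro!: imageI card_mono)
  then have "finite ?A" by (rule finite_subset) simp
  moreover have "?A \<noteq> {}"
    using lipschitz_on_cube_def[of d "\<lambda>_. 0"] by auto
  ultimately have "Inf ?A \<in> ?A"
    using cInf_eq_Min Min_in by metis
  with that show ?thesis by (auto simp: l0_dist_lip_def)
qed

lemma card_min_vertex_cover_le:
  assumes "min_vertex_cover_B0 d f C"
  shows "real (card C) / 2 ^ d \<le> l0_dist_lip d f"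
proof -
  obtain g where g: "lipschitz_on_cube d g" "disagree d f g = l0_dist_lip d f"
    by (rule l0_dist_lip_attained)
  have "card C \<le> card {x\<in>cube d. f x \<noteq> g x}"
    using assms vertex_cover_disagreement_set[OF g(1)] by (simp add: min_vertex_cover_B0_def)
  then show ?thesis
    using g(2) by (simp add: disagree_def field_simps)
qed

lemma lipschitz_extension_off_vertex_cover:
  assumes "vertex_cover_B0 d f C" "C \<noteq> cube d"
  obtains G where "lipschitz_on_cube d G" "\<And>x. x \<in> cube d - C \<Longrightarrow> G x = f x"
proof (rule lipschitz_on_cube_extension)
  show "cube d - C \<noteq> {}"
    using assms by (auto simp: vertex_cover_B0_def)
  show "\<bar>f x - f y\<bar> \<le> real (hamming x y)" if "x \<in> cube d - C" "y \<in> cube d - C" for x y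
    using assms(1) that by (force simp: vertex_cover_B0_def B0_edge_def VS_def)
qed (use that in auto)

text \<open>If \<open>G\<close> is within \<open>s\<close> of \<open>m\<close> at a center \<open>p \<notin> C\<close>, then any \<open>x \<notin> C\<close> with \<open>\<bar>f x - f p\<bar> > 2 s\<close>
  has \<open>\<bar>G x - m\<bar> \<ge> s\<close>.\<close>

lemma bad_centers_subset:
  assumes "C \<subseteq> cube d" "\<And>x. x \<in> cube d - C \<Longrightarrow> G x = f x"
    and "real (card {x\<in>cube d. s \<le> \<bar>G x - m\<bar>}) / 2 ^ d \<le> \<delta>"
  shows "{p\<in>cube d. prob_outside d f {f p - 2 * s .. f p + 2 * s}
                     > eps_mass d f C (- {f p - 2 * s .. f p + 2 * s}) + \<delta>}
         \<subseteq> C \<union> {x\<in>cube d. s \<le> \<bar>G x - m\<bar>}" (is "_ \<subseteq> C \<union> ?B")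
proof
  fix p
  define I where "I = {f p - 2 * s .. f p + 2 * s}"
  assume "p \<in> {p\<in>cube d. prob_outside d f {f p - 2 * s .. f p + 2 * s}
                     > eps_mass d f C (- {f p - 2 * s .. f p + 2 * s}) + \<delta>}"
  then have p: "p \<in> cube d" and bad: "prob_outside d f I > eps_mass d f C (- I) + \<delta>"
    unfolding I_def by simp_all
  show "p \<in> C \<union> ?B"
  proof (rule ccontr)
    assume "p \<notin> C \<union> ?B"
    with p have p_off: "p \<in> cube d - C" and p_central: "\<bar>G p - m\<bar> < s"
      by auto
    have "{x\<in>cube d. f x \<notin> I} \<subseteq> {x\<in>C. f x \<in> - I} \<union> ?B"
    proof
      fix x assume x: "x \<in> {x\<in>cube d. f x \<notin> I}"
      show "x \<in> {x\<in>C. f x \<in> - I} \<union> ?B"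
      proof (cases "x \<in> C")
        case False
        with x assms(2) p_off have "G x < G p - 2 * s \<or> G p + 2 * s < G x"
          by (auto simp: I_def)
        with p_central have "s \<le> \<bar>G x - m\<bar>"
          by linarith
        with x show ?thesis by simp
      next
        case True
        with x show ?thesis by auto
      qed
    qed
    then have "card {x\<in>cube d. f x \<notin> I} \<le> card ({x\<in>C. f x \<in> - I} \<union> ?B)"
      using finite_subset[OF assms(1)] by (intro card_mono) auto
    also have "\<dots> \<le> card {x\<in>C. f x \<in> - I} + card ?B"
      by (rule card_Un_le)
    finally have "real (card {x\<in>cube d. f x \<notin> I}) \<le> real (card {x\<in>C. f x \<in> - I}) + real (card ?B)"
      by (simp only: of_nat_add[symmetric] of_nat_le_iff)
    then have "prob_outside d f I \<le> eps_mass d f C (- I) + real (card ?B) / 2 ^ d"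
      unfolding prob_outside_def eps_mass_def add_divide_distrib[symmetric]
      by (rule divide_right_mono) simp
    with assms(3) bad show False
      by linarith
  qed
qed

theorem lemma6p5:
  fixes d :: nat and \<epsilon> :: real and f :: "nat set \<Rightarrow> real" and C :: "nat set set"
  assumes "0 < \<epsilon>" and "\<epsilon> < 1/3" and "d \<ge> 4"
    and "l0_dist_lip d f \<le> \<epsilon>"
    and "min_vertex_cover_B0 d f C"
  shows "real (card {p \<in> cube d.
            let t = 2 * sqrt (real d * ln (real d / \<epsilon>));
                I = {f p - t .. f p + t}
            in prob_outside d f I > eps_mass d f C (- I) + \<epsilon> / real d}) / 2 ^ d
         \<le> 5 / 12"
proof -
  have cover: "vertex_cover_B0 d f C" and C_sub: "C \<subseteq> cube d"
    using assms(5) by (simp_all add: min_vertex_cover_B0_def vertex_cover_B0_def)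
  have card_C: "real (card C) / 2 ^ d \<le> \<epsilon>"
    using card_min_vertex_cover_le[OF assms(5)] assms(4) by linarith
  then have "C \<noteq> cube d"
    using assms(2) by (auto simp: card_cube)
  then obtain G where G: "lipschitz_on_cube d G" "\<And>x. x \<in> cube d - C \<Longrightarrow> G x = f x"
    using lipschitz_extension_off_vertex_cover[OF cover] by blast
  define s where "s = sqrt (real d * ln (real d / \<epsilon>))"
  define B where "B = {x\<in>cube d. s \<le> \<bar>G x - cube_mean d G\<bar>}"
  have card_B: "real (card B) / 2 ^ d \<le> \<epsilon> / real d"
    unfolding B_def s_def using card_tail_at_log_scale_le[OF G(1) assms(1)] assms(2,3) by simp
  have "{p \<in> cube d. let t = 2 * sqrt (real d * ln (real d / \<epsilon>)); I = {f p - t .. f p + t}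
          in prob_outside d f I > eps_mass d f C (- I) + \<epsilon> / real d} \<subseteq> C \<union> B" (is "?P \<subseteq> _")
    using bad_centers_subset[OF C_sub G(2) card_B[unfolded B_def]] by (simp add: Let_def s_def B_def)
  then have "card ?P \<le> card (C \<union> B)"
    using finite_subset[OF C_sub] by (intro card_mono) (auto simp: B_def)
  also have "\<dots> \<le> card C + card B"
    by (rule card_Un_le)
  finally have "real (card ?P) / 2 ^ d \<le> real (card C) / 2 ^ d + real (card B) / 2 ^ d"
    unfolding add_divide_distrib[symmetric] by (intro divide_right_mono) simp_all
  moreover have "\<epsilon> / real d < 1 / 12"
    using assms(2,3) by (simp add: field_simps)
  ultimately show ?thesis
    using card_C card_B assms(2) by linarith
qed

end
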